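(* Let $\mathbb Q$ be a probability measure on $(\Omega,\mathcal F)$ equivalent to $\mathbb P$, and let $(\mathcal B_n)_{n\in\mathbb N_0}$ be $\sigma$-subfields. Then $\mathcal B_n\to\mathcal B_0$ strongly under $\mathbb P$ if and only if $\mathcal B_n\to\mathcal B_0$ strongly under $\mathbb Q$.
   Context: Let $(\Omega,\mathcal F,\mathbb P)$ be a (not necessarily complete) probability space and $\mathcal N:=\{F\in\mathcal F:\mathbb P(F)=0\}$. A $\sigma$-subfield is a sub-$\sigma$-field $\mathcal A\subset\mathcal F$ with $\mathcal A=\sigma(\mathcal A\cup\mathcal N)$. For a probability measure $\mathbb R\sim\mathbb P$ and a $\sigma$-subfield $\mathcal A$, $\mathbb R_{\mathcal A}f:=\mathbb E^{\mathbb R}[f\mid\mathcal A]$. We say $\mathcal B_n\to\mathcal B_0$ strongly under $\mathbb R$ if $\mathbb R_{\mathcal B_n}\mathbb 1_A\to\mathbb R_{\mathcal B_0}\mathbb 1_A$ in $\mathbb R$-probability for every $A\in\mathcal F$. *)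

theory Defs
  imports "HOL-Probability.Probability"
begin

text \<open>It is represented as a measure whose
  space is the space of M and whose sets are A (its own measure is irrelevant).\<close>
definition sigma_subfield :: "'a measure \<Rightarrow> 'a measure \<Rightarrow> bool" where
  "sigma_subfield M A \<longleftrightarrow> subalgebra M A \<and>
     sigma_sets (space M) (sets A \<union> null_sets M) = sets A"

definition conv_in_prob :: "'a measure \<Rightarrow> (nat \<Rightarrow> 'a \<Rightarrow> real) \<Rightarrow> ('a \<Rightarrow> real) \<Rightarrow> bool" where
  "conv_in_prob R f g \<longleftrightarrow>
     (\<forall>e>0. (\<lambda>n. measure R {x \<in> space R. e < \<bar>f n x - g x\<bar>}) \<longlonglongrightarrow> 0)"

definition strong_conv :: "'a measure \<Rightarrow> (nat \<Rightarrow> 'a measure) \<Rightarrow> bool" where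
  "strong_conv R B \<longleftrightarrow>
     (\<forall>A \<in> sets R. conv_in_prob R (\<lambda>n. real_cond_exp R (B n) (indicator A))
                                  (real_cond_exp R (B 0) (indicator A)))"

end

theory Submission
  imports Defs
begin

text \<open>It suffices to transfer strong convergence from \<open>P\<close> to \<open>Q = Z \<cdot> P\<close>; the converse is
  the same statement with the roles exchanged. Boundedness and \<open>L\<^sup>1\<close>-contractivity of conditional
  expectations upgrade strong convergence under \<open>P\<close> to \<open>L\<^sup>1(P)\<close>-convergence of
  \<open>E\<^sub>P[f | B\<^sub>n]\<close> for every integrable \<open>f\<close>. Put \<open>Y\<^sub>n = E\<^sub>Q[1\<^sub>A | B\<^sub>n]\<close>,
  \<open>W\<^sub>n = E\<^sub>P[Z | B\<^sub>n]\<close>. Bayes' formula \<open>Y\<^sub>n W\<^sub>n = E\<^sub>P[Z 1\<^sub>A | B\<^sub>n]\<close> gives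
  \<open>|Y\<^sub>n - Y\<^sub>0| W\<^sub>0 \<le> |Y\<^sub>n W\<^sub>n - Y\<^sub>0 W\<^sub>0| + |W\<^sub>n - W\<^sub>0|\<close>, so \<open>(Y\<^sub>n - Y\<^sub>0) W\<^sub>0 \<rightarrow> 0\<close>
  in \<open>L\<^sup>1(P)\<close>, hence in \<open>P\<close>-probability and, by absolute continuity, in \<open>Q\<close>-probability.
  As \<open>W\<^sub>0 > 0\<close> \<open>Q\<close>-almost surely, \<open>Y\<^sub>n \<rightarrow> Y\<^sub>0\<close> in \<open>Q\<close>-probability.\<close>

lemma tendsto_zero_nonnegI:
  fixes f :: "nat \<Rightarrow> real"
  assumes "\<And>n. 0 \<le> f n" and "\<And>e. 0 < e \<Longrightarrow> eventually (\<lambda>n. f n < e) sequentially"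
  shows "f \<longlonglongrightarrow> 0"
  using assms by (intro order_tendstoI) (auto intro: always_eventually less_le_trans)

lemma finite_measure_subalgebra_if_prob_space:
  "prob_space M \<Longrightarrow> subalgebra M F \<Longrightarrow> finite_measure_subalgebra M F"
  by (intro finite_measure_subalgebra.intro finite_measure_subalgebra_axioms.intro)
    (auto simp: prob_space_def)

context sigma_finite_subalgebra
begin

lemma integral_abs_real_cond_exp_le:
  assumes f: "integrable M f"
  shows "(\<integral>x. \<bar>real_cond_exp M F f x\<bar> \<partial>M) \<le> (\<integral>x. \<bar>f x\<bar> \<partial>M)"
proof -
  let ?s = "\<lambda>x. sgn (real_cond_exp M F f x)"
  have [measurable]: "f \<in> borel_measurable M" "?s \<in> borel_measurable F"
    using f by auto
  have int: "integrable M (\<lambda>x. ?s x * f x)"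
    by (rule Bochner_Integration.integrable_bound[OF integrable_abs[OF f]])
       (auto simp: abs_mult abs_sgn_eq intro!: mult_left_le_one_le)
  have "(\<integral>x. \<bar>real_cond_exp M F f x\<bar> \<partial>M) = (\<integral>x. ?s x * real_cond_exp M F f x \<partial>M)"
    by (simp add: abs_sgn mult.commute)
  also have "\<dots> = (\<integral>x. ?s x * f x \<partial>M)"
    using int by (rule real_cond_exp_intg(2)) auto
  also have "\<dots> \<le> (\<integral>x. \<bar>f x\<bar> \<partial>M)"
    using int f by (intro integral_mono) (auto simp: sgn_real_def)
  finally show ?thesis .
qed

end

lemma measure_density_eq_integral:
  fixes Z :: "'a \<Rightarrow> real"
  assumes [measurable]: "Z \<in> borel_measurable M" "S \<in> sets M" and "\<And>x. 0 \<le> Z x"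
  shows "measure (density M Z) S = (\<integral>x. Z x * indicator S x \<partial>M)"
proof -
  have "measure (density M Z) S = (\<integral>x. indicator S x \<partial>density M Z)"
    using sets.sets_into_space[OF assms(2)] by (simp add: Int_absorb2)
  also have "\<dots> = (\<integral>x. Z x * indicator S x \<partial>M)"
    using assms by (subst integral_density) auto
  finally show ?thesis .
qed

text \<open>Absolute continuity of the integral, proved by truncating \<open>Z\<close> at level \<open>m\<close>.\<close>
lemma (in finite_measure) measure_density_tendsto_zero:
  fixes Z :: "'a \<Rightarrow> real"
  assumes [measurable]: "Z \<in> borel_measurable M" and Z_nonneg: "\<And>x. 0 \<le> Z x"
    and Z_int: "integrable M Z"
    and [measurable]: "\<And>n. S n \<in> sets M" and S: "(\<lambda>n. measure M (S n)) \<longlonglongrightarrow> 0"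
  shows "(\<lambda>n. measure (density M Z) (S n)) \<longlonglongrightarrow> 0"
proof (rule tendsto_zero_nonnegI)
  fix e :: real assume e: "0 < e"
  have "(\<lambda>m. \<integral>x. Z x - min (Z x) (real m) \<partial>M) \<longlonglongrightarrow> (\<integral>x. 0 \<partial>M)"
  proof (rule integral_dominated_convergence[where w = Z])
    show "AE x in M. (\<lambda>m. Z x - min (Z x) (real m)) \<longlonglongrightarrow> 0"
    proof (rule AE_I2)
      fix x
      obtain k where "Z x \<le> real k" using real_arch_simple by blast
      then have "eventually (\<lambda>m. Z x - min (Z x) (real m) = 0) sequentially"
        unfolding eventually_sequentially by (intro exI[of _ k]) (auto simp: min_def)
      then show "(\<lambda>m. Z x - min (Z x) (real m)) \<longlonglongrightarrow> 0" by (rule tendsto_eventually)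
    qed
  qed (use Z_int Z_nonneg in \<open>auto simp: min_def\<close>)
  then have "eventually (\<lambda>m. (\<integral>x. Z x - min (Z x) (real m) \<partial>M) < e/2) sequentially"
    using e by (intro order_tendstoD(2)) auto
  then obtain m where m: "(\<integral>x. Z x - min (Z x) (real m) \<partial>M) < e/2"
    by (auto simp: eventually_sequentially)
  have "eventually (\<lambda>n. measure M (S n) < e / (2 * (real m + 1))) sequentially"
    using e by (intro order_tendstoD(2)[OF S]) auto
  then show "eventually (\<lambda>n. measure (density M Z) (S n) < e) sequentially"
  proof eventually_elim
    case (elim n)
    have int_min: "integrable M (\<lambda>x. min (Z x) (real m))"
      by (rule Bochner_Integration.integrable_bound[OF Z_int]) (use Z_nonneg in \<open>auto simp: min_def\<close>)
    have "measure (density M Z) (S n) = (\<integral>x. Z x * indicator (S n) x \<partial>M)"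
      using Z_nonneg by (intro measure_density_eq_integral) auto
    also have "\<dots> \<le> (\<integral>x. (real m + 1) * indicator (S n) x + (Z x - min (Z x) (real m)) \<partial>M)"
      using Z_int int_min
      by (intro integral_mono) (auto simp: min_def split: split_indicator intro!: integrable_real_mult_indicator)
    also have "\<dots> = (real m + 1) * measure M (S n) + (\<integral>x. Z x - min (Z x) (real m) \<partial>M)"
      using Z_int int_min
      by (subst Bochner_Integration.integral_add) (auto simp: integrable_indicator_iff less_top[symmetric])
    also have "(real m + 1) * measure M (S n) < e/2"
      using elim by (simp add: field_simps)
    finally show ?case using m by linarith
  qed
qed simp

lemma (in prob_space) integral_abs_tendsto_zero_if_conv_in_prob:
  fixes f :: "nat \<Rightarrow> 'a \<Rightarrow> real"
  assumes conv: "conv_in_prob M f g"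
    and [measurable]: "\<And>n. f n \<in> borel_measurable M" "g \<in> borel_measurable M"
    and bound: "\<And>n. AE x in M. \<bar>f n x - g x\<bar> \<le> c"
  shows "(\<lambda>n. \<integral>x. \<bar>f n x - g x\<bar> \<partial>M) \<longlonglongrightarrow> 0"
proof (rule tendsto_zero_nonnegI)
  fix e :: real assume e: "0 < e"
  have "eventually (\<lambda>n. measure M {x \<in> space M. e/2 < \<bar>f n x - g x\<bar>} < e / (2 * (\<bar>c\<bar> + 1))) sequentially"
    using conv[unfolded conv_in_prob_def, rule_format, OF half_gt_zero[OF e]] e
    by (intro order_tendstoD(2)) auto
  then show "eventually (\<lambda>n. (\<integral>x. \<bar>f n x - g x\<bar> \<partial>M) < e) sequentially"
  proof eventually_elim
    case (elim n)
    let ?S = "{x \<in> space M. e/2 < \<bar>f n x - g x\<bar>}"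
    have "(\<integral>x. \<bar>f n x - g x\<bar> \<partial>M) \<le> (\<integral>x. e/2 + c * indicator ?S x \<partial>M)"
    proof (rule integral_mono_AE)
      show "integrable M (\<lambda>x. \<bar>f n x - g x\<bar>)"
        using bound[of n] by (intro integrable_const_bound[of _ c]) auto
      show "AE x in M. \<bar>f n x - g x\<bar> \<le> e/2 + c * indicator ?S x"
        using bound[of n] AE_space by eventually_elim (use e in \<open>auto split: split_indicator\<close>)
    qed (auto simp: integrable_indicator_iff less_top[symmetric])
    also have "\<dots> = e/2 + c * measure M ?S"
      by (simp add: integrable_indicator_iff less_top[symmetric] prob_space)
    also have "c * measure M ?S \<le> (\<bar>c\<bar> + 1) * measure M ?S"
      by (intro mult_right_mono) auto
    also have "\<dots> < e/2"
      using elim by (simp add: field_simps)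
    finally show ?case by linarith
  qed
qed simp

lemma measure_ge_tendsto_zero_if_integral_tendsto_zero:
  fixes V :: "nat \<Rightarrow> 'a \<Rightarrow> real"
  assumes "\<And>n. integrable M (V n)" and "\<And>n. AE x in M. 0 \<le> V n x"
    and "(\<lambda>n. \<integral>x. V n x \<partial>M) \<longlonglongrightarrow> 0" and "0 < c"
  shows "(\<lambda>n. measure M {x \<in> space M. c \<le> V n x}) \<longlonglongrightarrow> 0"
proof (rule tendsto_sandwich[of "\<lambda>_. 0" _ _ "\<lambda>n. (\<integral>x. V n x \<partial>M) / c"])
  show "\<forall>\<^sub>F n in sequentially. measure M {x \<in> space M. c \<le> V n x} \<le> (\<integral>x. V n x \<partial>M) / c"
    using integral_Markov_inequality_measure[OF assms(1) sets.top assms(2) assms(4)] by simp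
  show "(\<lambda>n. (\<integral>x. V n x \<partial>M) / c) \<longlonglongrightarrow> 0"
    using tendsto_divide[OF assms(3) tendsto_const[of c]] assms(4) by simp
qed (auto intro!: always_eventually)

lemma (in finite_measure) obtain_small_measure_below_level:
  fixes w :: "'a \<Rightarrow> real"
  assumes [measurable]: "w \<in> borel_measurable M" and w_pos: "AE x in M. 0 < w x" and "0 < e"
  obtains d where "0 < d" and "measure M {x \<in> space M. w x \<le> d} < e"
proof -
  define A where "A k = {x \<in> space M. w x \<le> 1 / Suc k}" for k
  have [measurable]: "A k \<in> sets M" for k
    unfolding A_def by measurable
  have "decseq A"
    unfolding A_def by (intro decseq_SucI) (auto simp: frac_le order_trans)
  then have "(\<lambda>k. measure M (A k)) \<longlonglongrightarrow> measure M (\<Inter>k. A k)"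
    by (intro finite_Lim_measure_decseq) auto
  moreover have "(\<Inter>k. A k) = {x \<in> space M. w x \<le> 0}"
  proof (intro equalityI subsetI)
    fix x assume x: "x \<in> (\<Inter>k. A k)"
    have "w x \<le> 0"
    proof (rule field_le_epsilon)
      fix d :: real assume "0 < d"
      then obtain k where "1 / Suc k < d"
        using nat_approx_posE by blast
      moreover have "w x \<le> 1 / Suc k" using x by (auto simp: A_def)
      ultimately show "w x \<le> 0 + d" by linarith
    qed
    with x show "x \<in> {x \<in> space M. w x \<le> 0}" by (auto simp: A_def)
  qed (auto simp: A_def order_trans)
  moreover have "measure M {x \<in> space M. w x \<le> 0} = 0"
    using AE_iff_measurable[of "{x \<in> space M. w x \<le> 0}" M "\<lambda>x. 0 < w x"] w_pos
    by (auto simp: measure_def not_less)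
  ultimately have "eventually (\<lambda>k. measure M (A k) < e) sequentially"
    using \<open>0 < e\<close> by (intro order_tendstoD(2)) auto
  then obtain k where "measure M (A k) < e"
    by (auto simp: eventually_sequentially)
  then show ?thesis
    by (intro that[of "1 / Suc k"]) (auto simp: A_def)
qed

lemma (in finite_measure) conv_in_prob_if_weighted:
  fixes f :: "nat \<Rightarrow> 'a \<Rightarrow> real"
  assumes [measurable]: "\<And>n. f n \<in> borel_measurable M" "g \<in> borel_measurable M" "w \<in> borel_measurable M"
    and w_pos: "AE x in M. 0 < w x"
    and weighted: "\<And>c. 0 < c \<Longrightarrow> (\<lambda>n. measure M {x \<in> space M. c \<le> \<bar>(f n x - g x) * w x\<bar>}) \<longlonglongrightarrow> 0"
  shows "conv_in_prob M f g"
  unfolding conv_in_prob_def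
proof (intro allI impI tendsto_zero_nonnegI)
  fix e \<epsilon> :: real assume e: "0 < e" and \<epsilon>: "0 < \<epsilon>"
  obtain d where d: "0 < d" and small: "measure M {x \<in> space M. w x \<le> d} < \<epsilon>/2"
    using obtain_small_measure_below_level[OF _ w_pos, of "\<epsilon>/2"] \<epsilon> by auto
  have "eventually (\<lambda>n. measure M {x \<in> space M. e * d \<le> \<bar>(f n x - g x) * w x\<bar>} < \<epsilon>/2) sequentially"
    using weighted[of "e * d"] e d \<epsilon> by (intro order_tendstoD(2)) auto
  then show "eventually (\<lambda>n. measure M {x \<in> space M. e < \<bar>f n x - g x\<bar>} < \<epsilon>) sequentially"
  proof eventually_elim
    case (elim n)
    let ?S = "{x \<in> space M. e * d \<le> \<bar>(f n x - g x) * w x\<bar>}"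
    let ?T = "{x \<in> space M. w x \<le> d}"
    have "{x \<in> space M. e < \<bar>f n x - g x\<bar>} \<subseteq> ?S \<union> ?T"
    proof (intro subsetI)
      fix x assume x: "x \<in> {x \<in> space M. e < \<bar>f n x - g x\<bar>}"
      show "x \<in> ?S \<union> ?T"
      proof (cases "w x \<le> d")
        case False
        then have "e * d \<le> \<bar>f n x - g x\<bar> * \<bar>w x\<bar>"
          using x e d by (intro mult_mono) auto
        with x show ?thesis by (auto simp: abs_mult)
      qed (use x in auto)
    qed
    then have "measure M {x \<in> space M. e < \<bar>f n x - g x\<bar>} \<le> measure M (?S \<union> ?T)"
      by (intro finite_measure_mono) auto
    also have "\<dots> \<le> measure M ?S + measure M ?T"
      by (intro measure_Un_le) auto
    finally show ?case using elim small by linarith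
  qed
qed simp

definition cond_exp_L1_dist :: "'a measure \<Rightarrow> (nat \<Rightarrow> 'a measure) \<Rightarrow> ('a \<Rightarrow> real) \<Rightarrow> nat \<Rightarrow> real" where
  "cond_exp_L1_dist M B f n = (\<integral>x. \<bar>real_cond_exp M (B n) f x - real_cond_exp M (B 0) f x\<bar> \<partial>M)"

context
  fixes M :: "'a measure" and B :: "nat \<Rightarrow> 'a measure"
  assumes prob: "prob_space M" and sub: "\<And>n. subalgebra M (B n)"
begin

lemma integrable_abs_cond_exp_diff:
  assumes "integrable M f"
  shows "integrable M (\<lambda>x. \<bar>real_cond_exp M (B n) f x - real_cond_exp M (B 0) f x\<bar>)"
proof -
  interpret Bn: finite_measure_subalgebra M "B n" by (rule finite_measure_subalgebra_if_prob_space[OF prob sub])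
  interpret B0: finite_measure_subalgebra M "B 0" by (rule finite_measure_subalgebra_if_prob_space[OF prob sub])
  show ?thesis using Bn.real_cond_exp_int(1)[OF assms] B0.real_cond_exp_int(1)[OF assms] by auto
qed

lemma cond_exp_L1_dist_nonneg: "0 \<le> cond_exp_L1_dist M B f n"
  by (simp add: cond_exp_L1_dist_def)

lemma cond_exp_L1_dist_le:
  assumes f: "integrable M f"
  shows "cond_exp_L1_dist M B f n \<le> 2 * (\<integral>x. \<bar>f x\<bar> \<partial>M)"
proof -
  interpret Bn: finite_measure_subalgebra M "B n" by (rule finite_measure_subalgebra_if_prob_space[OF prob sub])
  interpret B0: finite_measure_subalgebra M "B 0" by (rule finite_measure_subalgebra_if_prob_space[OF prob sub])
  have "cond_exp_L1_dist M B f n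
      \<le> (\<integral>x. \<bar>real_cond_exp M (B n) f x\<bar> + \<bar>real_cond_exp M (B 0) f x\<bar> \<partial>M)"
    unfolding cond_exp_L1_dist_def using Bn.real_cond_exp_int(1)[OF f] B0.real_cond_exp_int(1)[OF f]
    by (intro integral_mono) auto
  also have "\<dots> = (\<integral>x. \<bar>real_cond_exp M (B n) f x\<bar> \<partial>M) + (\<integral>x. \<bar>real_cond_exp M (B 0) f x\<bar> \<partial>M)"
    using Bn.real_cond_exp_int(1)[OF f] B0.real_cond_exp_int(1)[OF f] by (intro Bochner_Integration.integral_add) auto
  also have "\<dots> \<le> 2 * (\<integral>x. \<bar>f x\<bar> \<partial>M)"
    using Bn.integral_abs_real_cond_exp_le[OF f] B0.integral_abs_real_cond_exp_le[OF f] by simp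
  finally show ?thesis .
qed

lemma cond_exp_L1_dist_add_le:
  assumes f: "integrable M f" and g: "integrable M g"
  shows "cond_exp_L1_dist M B (\<lambda>x. f x + g x) n \<le> cond_exp_L1_dist M B f n + cond_exp_L1_dist M B g n"
proof -
  interpret Bn: finite_measure_subalgebra M "B n" by (rule finite_measure_subalgebra_if_prob_space[OF prob sub])
  interpret B0: finite_measure_subalgebra M "B 0" by (rule finite_measure_subalgebra_if_prob_space[OF prob sub])
  have "cond_exp_L1_dist M B (\<lambda>x. f x + g x) n
      \<le> (\<integral>x. \<bar>real_cond_exp M (B n) f x - real_cond_exp M (B 0) f x\<bar>
              + \<bar>real_cond_exp M (B n) g x - real_cond_exp M (B 0) g x\<bar> \<partial>M)"
    unfolding cond_exp_L1_dist_def
  proof (rule integral_mono_AE)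
    show "AE x in M. \<bar>real_cond_exp M (B n) (\<lambda>x. f x + g x) x - real_cond_exp M (B 0) (\<lambda>x. f x + g x) x\<bar>
        \<le> \<bar>real_cond_exp M (B n) f x - real_cond_exp M (B 0) f x\<bar>
          + \<bar>real_cond_exp M (B n) g x - real_cond_exp M (B 0) g x\<bar>"
      using Bn.real_cond_exp_add[OF f g] B0.real_cond_exp_add[OF f g] by eventually_elim auto
  qed (use f g in \<open>auto intro!: integrable_abs_cond_exp_diff\<close>)
  also have "\<dots> = cond_exp_L1_dist M B f n + cond_exp_L1_dist M B g n"
    unfolding cond_exp_L1_dist_def using f g
    by (intro Bochner_Integration.integral_add integrable_abs_cond_exp_diff)
  finally show ?thesis .
qed

lemma cond_exp_L1_dist_cmult:
  assumes f: "integrable M f"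
  shows "cond_exp_L1_dist M B (\<lambda>x. c * f x) n = \<bar>c\<bar> * cond_exp_L1_dist M B f n"
proof -
  interpret Bn: finite_measure_subalgebra M "B n" by (rule finite_measure_subalgebra_if_prob_space[OF prob sub])
  interpret B0: finite_measure_subalgebra M "B 0" by (rule finite_measure_subalgebra_if_prob_space[OF prob sub])
  have "cond_exp_L1_dist M B (\<lambda>x. c * f x) n
      = (\<integral>x. \<bar>c\<bar> * \<bar>real_cond_exp M (B n) f x - real_cond_exp M (B 0) f x\<bar> \<partial>M)"
    unfolding cond_exp_L1_dist_def
  proof (rule integral_cong_AE)
    show "AE x in M. \<bar>real_cond_exp M (B n) (\<lambda>x. c * f x) x - real_cond_exp M (B 0) (\<lambda>x. c * f x) x\<bar>
        = \<bar>c\<bar> * \<bar>real_cond_exp M (B n) f x - real_cond_exp M (B 0) f x\<bar>"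
      using Bn.real_cond_exp_cmult[OF f, of c] B0.real_cond_exp_cmult[OF f, of c]
      by eventually_elim (simp add: abs_mult right_diff_distrib[symmetric])
  qed auto
  then show ?thesis by (simp add: cond_exp_L1_dist_def)
qed

text \<open>By the two lemmas above, \<open>f \<mapsto> cond_exp_L1_dist M B f n\<close> is \<open>2\<close>-Lipschitz in \<open>L\<^sup>1\<close>,
  uniformly in \<open>n\<close>; so the \<open>f\<close> for which it tends to \<open>0\<close> form an \<open>L\<^sup>1\<close>-closed set.\<close>
lemma cond_exp_L1_dist_tendsto_zero_if_approx:
  assumes f: "integrable M f"
    and approx: "\<And>e. 0 < e \<Longrightarrow> \<exists>g. integrable M g \<and> (\<lambda>n. cond_exp_L1_dist M B g n) \<longlonglongrightarrow> 0
                                    \<and> (\<integral>x. \<bar>f x - g x\<bar> \<partial>M) < e"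
  shows "(\<lambda>n. cond_exp_L1_dist M B f n) \<longlonglongrightarrow> 0"
proof (rule tendsto_zero_nonnegI[OF cond_exp_L1_dist_nonneg])
  fix e :: real assume e: "0 < e"
  obtain g where g: "integrable M g" and lim_g: "(\<lambda>n. cond_exp_L1_dist M B g n) \<longlonglongrightarrow> 0"
    and close: "(\<integral>x. \<bar>f x - g x\<bar> \<partial>M) < e/4"
    using approx[of "e/4"] e by auto
  have fg: "integrable M (\<lambda>x. f x - g x)" using f g by auto
  have "eventually (\<lambda>n. cond_exp_L1_dist M B g n < e/2) sequentially"
    using e by (intro order_tendstoD(2)[OF lim_g]) auto
  then show "eventually (\<lambda>n. cond_exp_L1_dist M B f n < e) sequentially"
  proof eventually_elim
    case (elim n)
    have "cond_exp_L1_dist M B f n = cond_exp_L1_dist M B (\<lambda>x. g x + (f x - g x)) n"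
      by simp
    also have "\<dots> \<le> cond_exp_L1_dist M B g n + cond_exp_L1_dist M B (\<lambda>x. f x - g x) n"
      using g fg by (rule cond_exp_L1_dist_add_le)
    also have "cond_exp_L1_dist M B (\<lambda>x. f x - g x) n \<le> 2 * (\<integral>x. \<bar>f x - g x\<bar> \<partial>M)"
      using fg by (rule cond_exp_L1_dist_le)
    finally show ?case using elim close by linarith
  qed
qed

lemma cond_exp_L1_dist_indicator_tendsto_zero:
  assumes sc: "strong_conv M B" and A: "A \<in> sets M"
  shows "(\<lambda>n. cond_exp_L1_dist M B (indicator A) n) \<longlonglongrightarrow> 0"
proof -
  interpret prob_space M by (rule prob)
  have int_A: "integrable M (indicator A :: 'a \<Rightarrow> real)"
    using A by (simp add: integrable_indicator_iff less_top[symmetric])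
  have unit: "AE x in M. 0 \<le> real_cond_exp M (B n) (indicator A) x \<and> real_cond_exp M (B n) (indicator A) x \<le> 1" for n
  proof -
    interpret finite_measure_subalgebra M "B n" by (rule finite_measure_subalgebra_if_prob_space[OF prob sub])
    show ?thesis using real_cond_exp_ge_c[OF int_A, of 0] real_cond_exp_le_c[OF int_A, of 1]
      by (auto split: split_indicator)
  qed
  show ?thesis
    unfolding cond_exp_L1_dist_def
  proof (rule integral_abs_tendsto_zero_if_conv_in_prob)
    show "conv_in_prob M (\<lambda>n. real_cond_exp M (B n) (indicator A)) (real_cond_exp M (B 0) (indicator A))"
      using sc A unfolding strong_conv_def by blast
    show "AE x in M. \<bar>real_cond_exp M (B n) (indicator A) x - real_cond_exp M (B 0) (indicator A) x\<bar> \<le> 1" for n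
      using unit[of n] unit[of 0] by eventually_elim auto
  qed auto
qed

lemma cond_exp_L1_dist_tendsto_zero:
  assumes sc: "strong_conv M B" and f: "integrable M f"
  shows "(\<lambda>n. cond_exp_L1_dist M B f n) \<longlonglongrightarrow> 0"
  using f
proof (induct rule: integrable_induct)
  case (base A c)
  have "(\<lambda>x. indicator A x *\<^sub>R c) = (\<lambda>x. c * indicator A x)"
    by auto
  then show ?case
    using tendsto_mult_right_zero[OF cond_exp_L1_dist_indicator_tendsto_zero[OF sc base(1)], of "\<bar>c\<bar>"] base
    by (simp add: cond_exp_L1_dist_cmult integrable_indicator_iff less_top[symmetric])
next
  case (add f g)
  show ?case
    by (rule tendsto_sandwich[OF _ _ tendsto_const tendsto_add_zero[OF add(2,4)]])
       (auto intro!: always_eventually cond_exp_L1_dist_nonneg cond_exp_L1_dist_add_le add(1,3))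
next
  case (lim f s)
  interpret prob_space M by (rule prob)
  have "(\<lambda>i. \<integral>x. \<bar>f x - s i x\<bar> \<partial>M) \<longlonglongrightarrow> (\<integral>x. 0 \<partial>M)"
  proof (rule integral_dominated_convergence[where w = "\<lambda>x. 3 * \<bar>f x\<bar>"])
    show "AE x in M. (\<lambda>i. \<bar>f x - s i x\<bar>) \<longlonglongrightarrow> 0"
    proof (rule AE_I2)
      fix x assume "x \<in> space M"
      then have "(\<lambda>i. f x - s i x) \<longlonglongrightarrow> f x - f x"
        by (intro tendsto_diff tendsto_const lim(3))
      then show "(\<lambda>i. \<bar>f x - s i x\<bar>) \<longlonglongrightarrow> 0"
        by (intro tendsto_rabs_zero) simp
    qed
    show "AE x in M. norm \<bar>f x - s i x\<bar> \<le> 3 * \<bar>f x\<bar>" for i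
      using lim(4)[of _ i] by (intro AE_I2) fastforce
  qed (use lim in auto)
  then have "\<exists>i. (\<integral>x. \<bar>f x - s i x\<bar> \<partial>M) < e" if "0 < e" for e
    using order_tendstoD(2)[of _ 0 sequentially e] that eventually_sequentially by force
  then show ?case
    using lim(1,2,5) by (intro cond_exp_L1_dist_tendsto_zero_if_approx) blast+
qed

end

context
  fixes P Q :: "'a measure" and Z :: "'a \<Rightarrow> real"
  assumes prob_P: "prob_space P" and prob_Q: "prob_space Q"
    and Z_measurable [measurable]: "Z \<in> borel_measurable P" and Z_nonneg: "\<And>x. 0 \<le> Z x"
    and Z_integrable: "integrable P Z" and Q_density: "Q = density P Z"
    and null_sets_Q: "null_sets Q = null_sets P"
begin

lemma sets_Q: "sets Q = sets P"
  by (simp add: Q_density)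

lemma space_Q: "space Q = space P"
  by (simp add: Q_density)

lemma AE_Q_iff_AE_P: "(AE x in Q. p x) \<longleftrightarrow> (AE x in P. p x)"
  unfolding ae_filter_def space_Q null_sets_Q ..

lemma integral_Q:
  assumes [measurable]: "f \<in> borel_measurable P"
  shows "(\<integral>x. f x \<partial>Q) = (\<integral>x. Z x * f x \<partial>P)"
  unfolding Q_density by (subst integral_density) (use Z_nonneg in auto)

lemma subalgebra_Q: "subalgebra P F \<Longrightarrow> subalgebra Q F"
  unfolding subalgebra_def space_Q sets_Q .

lemma measure_Q_eq_integral_cond_exp:
  assumes F: "subalgebra P F" and T: "T \<in> sets F"
  shows "measure Q T = (\<integral>x. indicator T x * real_cond_exp P F Z x \<partial>P)"
proof -
  interpret finite_measure_subalgebra P F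
    using prob_P F by (rule finite_measure_subalgebra_if_prob_space)
  have [measurable]: "T \<in> sets P" using F T by (auto simp: subalgebra_def)
  have "measure Q T = (\<integral>x. Z x * indicator T x \<partial>P)"
    unfolding Q_density using Z_nonneg by (intro measure_density_eq_integral) auto
  also have "\<dots> = (\<integral>x. indicator T x * real_cond_exp P F Z x \<partial>P)"
    using Z_integrable T
    by (subst real_cond_exp_intg(2)) (auto simp: mult.commute integrable_real_mult_indicator)
  finally show ?thesis .
qed

lemma cond_exp_density_pos:
  assumes F: "subalgebra P F"
  shows "AE x in Q. 0 < real_cond_exp P F Z x"
proof -
  let ?W = "real_cond_exp P F Z"
  let ?T = "{x \<in> space P. ?W x \<le> 0}"
  have sp: "space F = space P" using F by (simp add: subalgebra_def)
  have T: "?T \<in> sets F"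
    using borel_measurable_cond_exp[of P F Z] unfolding sp[symmetric] by measurable
  have "measure Q ?T = (\<integral>x. indicator ?T x * ?W x \<partial>P)"
    by (rule measure_Q_eq_integral_cond_exp[OF F T])
  also have "\<dots> \<le> 0"
    using Bochner_Integration.integral_nonneg[of P "\<lambda>x. - (indicator ?T x * ?W x)"]
    by (auto split: split_indicator)
  finally have "emeasure Q ?T = 0"
    using finite_measure.emeasure_eq_measure[OF prob_space.axioms(1)[OF prob_Q]] measure_nonneg[of Q ?T]
    by simp
  moreover have "?T \<in> sets Q" using T F by (auto simp: sets_Q subalgebra_def)
  ultimately show ?thesis
    by (subst AE_iff_measurable[of ?T]) (auto simp: space_Q not_less)
qed

lemma cond_exp_Q_indicator_bounds:
  assumes F: "subalgebra P F" and A: "A \<in> sets P"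
  shows "AE x in P. 0 \<le> real_cond_exp Q F (indicator A) x \<and> real_cond_exp Q F (indicator A) x \<le> 1"
proof -
  interpret finite_measure_subalgebra Q F
    using prob_Q subalgebra_Q[OF F] by (rule finite_measure_subalgebra_if_prob_space)
  have "integrable Q (indicator A :: 'a \<Rightarrow> real)"
    using A by (simp add: sets_Q integrable_indicator_iff less_top[symmetric])
  then show ?thesis
    using real_cond_exp_ge_c[of "indicator A" 0] real_cond_exp_le_c[of "indicator A" 1]
    by (auto simp: AE_Q_iff_AE_P[symmetric] split: split_indicator)
qed

text \<open>Bayes' formula \<open>E\<^sub>Q[1\<^sub>A | F] = E\<^sub>P[Z 1\<^sub>A | F] / E\<^sub>P[Z | F]\<close>, in multiplied-out form.\<close>
lemma real_cond_exp_density_indicator: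
  assumes F: "subalgebra P F" and A [measurable]: "A \<in> sets P"
  shows "AE x in P. real_cond_exp P F (\<lambda>x. Z x * indicator A x) x
      = real_cond_exp Q F (indicator A) x * real_cond_exp P F Z x"
proof -
  interpret FP: finite_measure_subalgebra P F
    using prob_P F by (rule finite_measure_subalgebra_if_prob_space)
  interpret FQ: finite_measure_subalgebra Q F
    using prob_Q subalgebra_Q[OF F] by (rule finite_measure_subalgebra_if_prob_space)
  let ?Y = "real_cond_exp Q F (indicator A)"
  let ?W = "real_cond_exp P F Z"
  have [measurable]: "?Y \<in> borel_measurable P"
    using borel_measurable_cond_exp2[of Q F "indicator A"] by (simp add: sets_Q cong: measurable_cong_sets)
  have Y_bound: "AE x in P. \<bar>?Y x\<bar> \<le> 1"
    using cond_exp_Q_indicator_bounds[OF F A] by eventually_elim auto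
  have YW_int: "integrable P (\<lambda>x. ?Y x * ?W x)"
    by (rule Bochner_Integration.integrable_bound[OF FP.real_cond_exp_int(1)[OF Z_integrable]])
       (use Y_bound in \<open>auto simp: abs_mult elim!: eventually_mono intro: mult_left_le_one_le\<close>)
  show ?thesis
  proof (rule FP.real_cond_exp_charact)
    fix C assume C: "C \<in> sets F"
    have [measurable]: "C \<in> sets P" using C F by (auto simp: subalgebra_def)
    have "(\<integral>x\<in>C. ?Y x * ?W x \<partial>P) = (\<integral>x. (indicator C x * ?Y x) * ?W x \<partial>P)"
      unfolding set_lebesgue_integral_def by (simp add: mult_ac)
    also have "\<dots> = (\<integral>x. (indicator C x * ?Y x) * Z x \<partial>P)"
    proof (rule FP.real_cond_exp_intg(2))
      show "integrable P (\<lambda>x. indicator C x * ?Y x * Z x)"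
        by (rule Bochner_Integration.integrable_bound[OF Z_integrable])
           (use Y_bound Z_nonneg in \<open>auto simp: abs_mult elim!: eventually_mono
              intro: mult_left_le_one_le split: split_indicator\<close>)
    qed (use C in auto)
    also have "\<dots> = (\<integral>x. indicator C x * ?Y x \<partial>Q)"
      by (subst integral_Q) (auto simp: mult_ac)
    also have "\<dots> = (\<integral>x. indicator C x * indicator A x \<partial>Q)"
    proof (rule FQ.real_cond_exp_intg(2))
      show "integrable Q (\<lambda>x. indicator C x * indicator A x :: real)"
        using A C F
        by (auto simp: sets_Q subalgebra_def indicator_inter_arith[symmetric] integrable_indicator_iff less_top[symmetric])
    qed (use C A in \<open>auto simp: sets_Q cong: measurable_cong_sets\<close>)
    also have "\<dots> = (\<integral>x\<in>C. Z x * indicator A x \<partial>P)"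
      unfolding set_lebesgue_integral_def by (subst integral_Q) (auto simp: mult_ac)
    finally show "(\<integral>x\<in>C. Z x * indicator A x \<partial>P) = (\<integral>x\<in>C. ?Y x * ?W x \<partial>P)" by simp
  qed (use YW_int Z_integrable in \<open>auto intro: integrable_real_mult_indicator\<close>)
qed

lemma integral_weighted_cond_exp_Q_diff_le:
  assumes F: "subalgebra P F" and G: "subalgebra P G" and A [measurable]: "A \<in> sets P"
  defines "V \<equiv> \<lambda>x. \<bar>(real_cond_exp Q F (indicator A) x - real_cond_exp Q G (indicator A) x)
                    * real_cond_exp P G Z x\<bar>"
  shows "integrable P V"
    and "(\<integral>x. V x \<partial>P)
      \<le> (\<integral>x. \<bar>real_cond_exp P F (\<lambda>x. Z x * indicator A x) x - real_cond_exp P G (\<lambda>x. Z x * indicator A x) x\<bar> \<partial>P)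
        + (\<integral>x. \<bar>real_cond_exp P F Z x - real_cond_exp P G Z x\<bar> \<partial>P)"
proof -
  interpret FP: finite_measure_subalgebra P F
    using prob_P F by (rule finite_measure_subalgebra_if_prob_space)
  interpret GP: finite_measure_subalgebra P G
    using prob_P G by (rule finite_measure_subalgebra_if_prob_space)
  let ?Y = "\<lambda>H. real_cond_exp Q H (indicator A)"
  let ?U = "\<lambda>H. real_cond_exp P H (\<lambda>x. Z x * indicator A x)"
  let ?W = "\<lambda>H. real_cond_exp P H Z"
  let ?bound = "\<lambda>x. \<bar>?U F x - ?U G x\<bar> + \<bar>?W F x - ?W G x\<bar>"
  have [measurable]: "?Y H \<in> borel_measurable P" for H
    using borel_measurable_cond_exp2[of Q H "indicator A"] by (simp add: sets_Q cong: measurable_cong_sets)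
  have ZA: "integrable P (\<lambda>x. Z x * indicator A x)"
    using Z_integrable by (rule integrable_real_mult_indicator[OF A])
  have bound_int: "integrable P ?bound"
    using FP.real_cond_exp_int(1)[OF ZA] GP.real_cond_exp_int(1)[OF ZA]
      FP.real_cond_exp_int(1)[OF Z_integrable] GP.real_cond_exp_int(1)[OF Z_integrable] by auto
  have V_le: "AE x in P. V x \<le> ?bound x"
    using cond_exp_Q_indicator_bounds[OF F A] real_cond_exp_density_indicator[OF F A]
      real_cond_exp_density_indicator[OF G A]
  proof eventually_elim
    case (elim x)
    have "(?Y F x - ?Y G x) * ?W G x = (?U F x - ?U G x) - ?Y F x * (?W F x - ?W G x)"
      using elim by (simp add: algebra_simps)
    moreover have "\<bar>?Y F x * (?W F x - ?W G x)\<bar> \<le> \<bar>?W F x - ?W G x\<bar>"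
      using elim by (auto simp: abs_mult intro: mult_left_le_one_le)
    ultimately show ?case
      unfolding V_def by linarith
  qed
  show V_int: "integrable P V"
    by (rule Bochner_Integration.integrable_bound[OF bound_int])
       (use V_le in \<open>auto simp: V_def elim!: eventually_mono\<close>)
  have "(\<integral>x. V x \<partial>P) \<le> (\<integral>x. ?bound x \<partial>P)"
    using V_int bound_int V_le by (rule integral_mono_AE)
  also have "\<dots> = (\<integral>x. \<bar>?U F x - ?U G x\<bar> \<partial>P) + (\<integral>x. \<bar>?W F x - ?W G x\<bar> \<partial>P)"
    using FP.real_cond_exp_int(1)[OF ZA] GP.real_cond_exp_int(1)[OF ZA]
      FP.real_cond_exp_int(1)[OF Z_integrable] GP.real_cond_exp_int(1)[OF Z_integrable]
    by (intro Bochner_Integration.integral_add) auto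
  finally show "(\<integral>x. V x \<partial>P) \<le> (\<integral>x. \<bar>?U F x - ?U G x\<bar> \<partial>P) + (\<integral>x. \<bar>?W F x - ?W G x\<bar> \<partial>P)" .
qed

lemma strong_conv_density:
  assumes sub: "\<And>n. subalgebra P (B n)" and sc: "strong_conv P B"
  shows "strong_conv Q B"
  unfolding strong_conv_def
proof
  interpret Q: prob_space Q by (rule prob_Q)
  fix A assume "A \<in> sets Q"
  then have A [measurable]: "A \<in> sets P" by (simp add: sets_Q)
  let ?Y = "\<lambda>n. real_cond_exp Q (B n) (indicator A)"
  let ?W = "real_cond_exp P (B 0) Z"
  let ?V = "\<lambda>n x. \<bar>(?Y n x - ?Y 0 x) * ?W x\<bar>"
  note weighted = integral_weighted_cond_exp_Q_diff_le[OF sub sub A]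
  have [measurable]: "?Y n \<in> borel_measurable P" "?V n \<in> borel_measurable P" for n
    using borel_measurable_cond_exp2[of Q "B n" "indicator A"] weighted(1)[of n 0]
    by (auto simp: sets_Q cong: measurable_cong_sets)
  have V_lim: "(\<lambda>n. \<integral>x. ?V n x \<partial>P) \<longlonglongrightarrow> 0"
  proof (rule tendsto_sandwich[OF _ _ tendsto_const tendsto_add_zero])
    show "(\<lambda>n. cond_exp_L1_dist P B (\<lambda>x. Z x * indicator A x) n) \<longlonglongrightarrow> 0"
         "(\<lambda>n. cond_exp_L1_dist P B Z n) \<longlonglongrightarrow> 0"
      using Z_integrable
      by (auto intro!: cond_exp_L1_dist_tendsto_zero[OF prob_P sub sc] integrable_real_mult_indicator)
    show "\<forall>\<^sub>F n in sequentially. (\<integral>x. ?V n x \<partial>P)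
        \<le> cond_exp_L1_dist P B (\<lambda>x. Z x * indicator A x) n + cond_exp_L1_dist P B Z n"
      using weighted(2) by (auto simp: cond_exp_L1_dist_def)
  qed auto
  have "(\<lambda>n. measure Q {x \<in> space Q. c \<le> ?V n x}) \<longlonglongrightarrow> 0" if "0 < c" for c
  proof -
    have "(\<lambda>n. measure P {x \<in> space P. c \<le> ?V n x}) \<longlonglongrightarrow> 0"
      using V_lim that weighted(1) by (intro measure_ge_tendsto_zero_if_integral_tendsto_zero) auto
    from finite_measure.measure_density_tendsto_zero[OF prob_space.axioms(1)[OF prob_P]
        Z_measurable Z_nonneg Z_integrable _ this]
    show ?thesis by (simp add: Q_density[symmetric] space_Q)
  qed
  then show "conv_in_prob Q ?Y (?Y 0)"
    using cond_exp_density_pos[OF sub]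
    by (intro Q.conv_in_prob_if_weighted[where w = ?W]) (auto simp: sets_Q cong: measurable_cong_sets)
qed

end

lemma obtain_integrable_density:
  assumes P: "prob_space P" and Q: "prob_space Q" and sets_eq: "sets Q = sets P"
    and ac: "absolutely_continuous P Q"
  obtains Z :: "'a \<Rightarrow> real" where "Z \<in> borel_measurable P" and "\<And>x. 0 \<le> Z x"
    and "integrable P Z" and "Q = density P Z"
proof -
  interpret prob_space P by (rule P)
  obtain D where D: "D \<in> borel_measurable P" "AE x in P. RN_deriv P Q x = ennreal (D x)" "\<And>x. 0 \<le> D x"
    using real_RN_deriv[OF prob_space.axioms(1)[OF Q] ac sets_eq] by metis
  have "Q = density P (RN_deriv P Q)"
    using density_RN_deriv[OF ac sets_eq] by simp
  also have "\<dots> = density P D"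
    using D by (intro density_cong) auto
  finally have Q_density: "Q = density P D" .
  have "integrable Q (\<lambda>_. 1::real)"
    using Q by (simp add: finite_measure.integrable_const prob_space_def)
  then have "integrable P D"
    using D unfolding Q_density by (subst (asm) integrable_density) auto
  then show ?thesis using that D Q_density by blast
qed

theorem proposition4p4:
  fixes P Q :: "'a measure" and B :: "nat \<Rightarrow> 'a measure"
  assumes "prob_space P" and "prob_space Q"
    and "sets Q = sets P" and "null_sets Q = null_sets P"
    and "\<And>n. sigma_subfield P (B n)"
  shows "strong_conv P B \<longleftrightarrow> strong_conv Q B"
proof -
  have sub_P: "\<And>n. subalgebra P (B n)"
    using assms(5) by (simp add: sigma_subfield_def)
  have sub_Q: "\<And>n. subalgebra Q (B n)"
    using sub_P assms(3) sets_eq_imp_space_eq[OF assms(3)] by (simp add: subalgebra_def)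
  obtain Z where "Z \<in> borel_measurable P" "\<And>x. 0 \<le> Z x" "integrable P Z" "Q = density P Z"
    using obtain_integrable_density[OF assms(1-3)] assms(4) by (auto simp: absolutely_continuous_def)
  note P_to_Q = strong_conv_density[OF assms(1,2) this assms(4), of B, OF sub_P]
  obtain Z' where "Z' \<in> borel_measurable Q" "\<And>x. 0 \<le> Z' x" "integrable Q Z'" "P = density Q Z'"
    using obtain_integrable_density[OF assms(2,1) assms(3)[symmetric]] assms(4)
    by (auto simp: absolutely_continuous_def)
  note Q_to_P = strong_conv_density[OF assms(2,1) this assms(4)[symmetric], of B, OF sub_Q]
  show ?thesis using P_to_Q Q_to_P by blast
qed

end
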